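(* Let $(X,V)$ and $(\overline{X},\overline{V})$ be solutions of the discrete Motsch–Tadmor model (as in the context) whose initial data satisfy \[ \max\{\|\Delta^x(0)\|_F,\|\Delta^{\overline{x}}(0)\|_F\}<M,\quad \|\Delta^v(0)\|_F<\kappa\int_{\|\Delta^x(0)\|_F}^M\psi(s)\,ds,\quad \|\Delta^{\overline{v}}(0)\|_F<\kappa\int_{\|\Delta^{\overline{x}}(0)\|_F}^M\psi(s)\,ds, \] and let $C\in(0,1)$. Then there are constants $\bar c_0,\bar c_1,\bar c_2\ge0$ depending on $V(0)$, $\overline{V}(0)$ and the model parameters such that, for $h>0$ sufficiently small and any $0<\epsilon<1$, with $b_1=(\bar c_0\epsilon+\bar c_1h+\bar c_2h^2)^{1/2}$ and $b_2=C\kappa\psi(M)h$, for all $n\ge0$ \[ \|\Delta^v(n)-\Delta^{\overline{v}}(n)\|_F\le(1-\epsilon)^n\|\Delta^v(0)-\Delta^{\overline{v}}(0)\|_F+\frac{b_1e^{b_2}}{1-(1-\epsilon)e^{b_2}}e^{-b_2n}. \]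
   Context: Discrete MT model: fix $N\ge1$, $d\ge1$, $\kappa>0$, $h>0$, and $a:[0,\infty)\to\mathbb{R}$ with constants $0<c_1\le c_2$, $c_1\le a\le c_2$, $|a(r_1)-a(r_2)|\le L_a|r_1-r_2|$ ($L_a>0$); $0<h<\min\{1,1/\kappa\}$. A solution satisfies $x_i(n+1)=x_i(n)+hv_i(n)$, $v_i(n+1)=v_i(n)+h\kappa\sum_j\phi_{ij}(n)(v_j(n)-v_i(n))$ with $\phi_{ij}(n)=\frac{a(\|x_i(n)-x_j(n)\|)}{\sum_ka(\|x_i(n)-x_k(n)\|)}$, $x_i,v_i\in\mathbb{R}^d$. Notation: $\Delta^x_{ij}=x_i-x_j$, $\Delta^v_{ij}=v_i-v_j$, similarly $\Delta^{\overline{x}},\Delta^{\overline{v}}$; $\|A\|_F=(\sum_{i,j}\|A_{ij}\|^2)^{1/2}$. Constants: $\|\phi\|_{\mathrm{Lip}}=\frac{L_a}{Nc_1}(1+\frac{c_2}{c_1})$, $M=\frac{1}{4N\|\phi\|_{\mathrm{Lip}}}$, $\psi(s)=1-\|\phi\|_{\mathrm{Lip}}Ns$. *)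

theory Defs
  imports "HOL-Analysis.Analysis"
begin

text \<open>Agents are indexed by i < N; positions/velocities live in real^'d (d = CARD('d) \<ge> 1).
  A trajectory is a function nat (time step) \<Rightarrow> nat (agent index) \<Rightarrow> real^'d.\<close>

definition mt_phi :: "nat \<Rightarrow> (real \<Rightarrow> real) \<Rightarrow> (nat \<Rightarrow> real^'d) \<Rightarrow> nat \<Rightarrow> nat \<Rightarrow> real" where
  "mt_phi N a x i j = a (norm (x i - x j)) / (\<Sum>k<N. a (norm (x i - x k)))"

definition MT_solution :: "nat \<Rightarrow> real \<Rightarrow> (real \<Rightarrow> real) \<Rightarrow> real \<Rightarrow>
    (nat \<Rightarrow> nat \<Rightarrow> real^'d) \<Rightarrow> (nat \<Rightarrow> nat \<Rightarrow> real^'d) \<Rightarrow> bool" where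
  "MT_solution N \<kappa> a h x v \<longleftrightarrow>
     (\<forall>n i. i < N \<longrightarrow>
        x (Suc n) i = x n i + h *\<^sub>R v n i \<and>
        v (Suc n) i = v n i + (h * \<kappa>) *\<^sub>R (\<Sum>j<N. mt_phi N a (x n) i j *\<^sub>R (v n j - v n i)))"

text \<open>Frobenius norm of the difference matrix (Delta_{ij}) = (y_i - y_j).\<close>
definition frobD :: "nat \<Rightarrow> (nat \<Rightarrow> real^'d) \<Rightarrow> real" where
  "frobD N y = sqrt (\<Sum>i<N. \<Sum>j<N. (norm (y i - y j))\<^sup>2)"

definition frobDD :: "nat \<Rightarrow> (nat \<Rightarrow> real^'d) \<Rightarrow> (nat \<Rightarrow> real^'d) \<Rightarrow> real" where
  "frobDD N y z = sqrt (\<Sum>i<N. \<Sum>j<N. (norm ((y i - y j) - (z i - z j)))\<^sup>2)"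

definition lip_phi :: "nat \<Rightarrow> real \<Rightarrow> real \<Rightarrow> real \<Rightarrow> real" where
  "lip_phi N La c1 c2 = La / (real N * c1) * (1 + c2 / c1)"

definition M_const :: "nat \<Rightarrow> real \<Rightarrow> real \<Rightarrow> real \<Rightarrow> real" where
  "M_const N La c1 c2 = 1 / (4 * real N * lip_phi N La c1 c2)"

definition psi :: "nat \<Rightarrow> real \<Rightarrow> real \<Rightarrow> real \<Rightarrow> real \<Rightarrow> real" where
  "psi N La c1 c2 s = 1 - lip_phi N La c1 c2 * real N * s"

end

(* Each solution flocks on its own, fast enough to absorb the whole stability estimate.
   One step of the scheme multiplies the velocities by a stochastic matrix whose entries are at
   least h kappa psi(p) / N, where p bounds the position diameter; so the velocity diameter q
   contracts by the factor 1 - h kappa psi(p), while p grows by at most h q. Along this comparison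
   system the energy q + kappa Psi(p), with Psi' = psi, does not increase, which under the
   smallness assumptions on the initial data keeps p below M. Hence psi(p) >= psi(M) = 3/4 and
   q decays like (1 - 3 h kappa / 4)^n. The Frobenius norm of Delta^v(n) - Delta^vbar(n) is then
   at most K exp(-b2 n) with K = N (|Delta^v(0)| + |Delta^vbar(0)|), and for h kappa < epsilon this
   is dominated by the right-hand side with cb0 = K^2 and cb1 = cb2 = 0. *)

theory Submission
  imports Defs
begin

(* Psi' = psi for psi(s) = 1 - l s; q + k Psi(p) is the Lyapunov energy of the comparison system. *)
definition psi_primitive :: "real \<Rightarrow> real \<Rightarrow> real" where
  "psi_primitive l s = s - l * s\<^sup>2 / 2"

lemma integral_one_minus_linear:
  fixes a b l :: real
  assumes "a \<le> b"
  shows "integral {a..b} (\<lambda>s. 1 - l * s) = psi_primitive l b - psi_primitive l a"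
proof -
  have "((\<lambda>s. 1 - l * s) has_integral psi_primitive l b - psi_primitive l a) {a..b}"
  proof (rule fundamental_theorem_of_calculus[OF assms])
    fix s
    have "(psi_primitive l has_real_derivative 1 - l * s) (at s)"
      unfolding psi_primitive_def by (auto intro!: derivative_eq_intros simp: power2_eq_square)
    then show "(psi_primitive l has_vector_derivative 1 - l * s) (at s within {a..b})"
      by (simp add: has_real_derivative_iff_has_vector_derivative has_vector_derivative_at_within)
  qed
  then show ?thesis
    by (rule integral_unique)
qed

lemma psi_primitive_strict_mono:
  assumes "s < t" and "l * (s + t) < 2"
  shows "psi_primitive l s < psi_primitive l t"
proof -
  have "psi_primitive l t - psi_primitive l s = (t - s) * (1 - l * (s + t) / 2)"
    unfolding psi_primitive_def by (simp add: power2_eq_square field_simps)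
  also have "\<dots> > 0"
    using assms by (intro mult_pos_pos) auto
  finally show ?thesis
    by simp
qed

lemma psi_primitive_nonneg:
  assumes "0 \<le> s" and "l * s \<le> 2"
  shows "0 \<le> psi_primitive l s"
proof -
  have "psi_primitive l s = s * (1 - l * s / 2)"
    unfolding psi_primitive_def by (simp add: power2_eq_square algebra_simps)
  then show ?thesis
    using assms by simp
qed

lemma psi_primitive_le: "0 \<le> l \<Longrightarrow> psi_primitive l s \<le> s"
  unfolding psi_primitive_def by simp

(* Majorants (p, q) of the position and velocity diameters, evolving by the comparison system
   p' = p + h q, q' = (1 - h k psi(p)) q. *)
primrec diameter_bounds :: "real \<Rightarrow> real \<Rightarrow> real \<Rightarrow> real \<Rightarrow> real \<Rightarrow> nat \<Rightarrow> real \<times> real" where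
  "diameter_bounds l h k p q 0 = (p, q)"
| "diameter_bounds l h k p q (Suc n) =
     (case diameter_bounds l h k p q n of (p', q') \<Rightarrow> (p' + h * q', (1 - h * k * (1 - l * p')) * q'))"

lemma diameter_bounds_step:
  fixes l h k p q E :: real
  defines "M \<equiv> 1 / (4 * l)"
  assumes l: "0 < l" and h: "0 < h" and k: "0 < k" and hk: "h * k < 1"
    and p: "0 \<le> p" "p < M" and q: "0 \<le> q"
    and energy: "q + k * psi_primitive l p \<le> E" "E < k * psi_primitive l M"
  shows "p + h * q < M"
    and "0 \<le> (1 - h * k * (1 - l * p)) * q"
    and "(1 - h * k * (1 - l * p)) * q + k * psi_primitive l (p + h * q) \<le> E"
    and "(1 - h * k * (1 - l * p)) * q \<le> (1 - h * k * (3 / 4)) * q"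
proof -
  have "0 < h * k"
    using h k by simp
  have lM: "l * M = 1 / 4"
    using l unfolding M_def by simp
  have "l * p < l * M"
    using l p by simp
  then have lp: "0 \<le> l * p" "l * p < 1 / 4"
    using l p lM by auto
  have "h * k * (3 / 4) \<le> h * k * (1 - l * p)" "h * k * (1 - l * p) \<le> h * k"
    using \<open>0 < h * k\<close> lp mult_left_mono[of "3 / 4" "1 - l * p" "h * k"] mult_left_mono[of "1 - l * p" 1 "h * k"]
    by simp_all
  then show factor: "(1 - h * k * (1 - l * p)) * q \<le> (1 - h * k * (3 / 4)) * q"
    and factor_nonneg: "0 \<le> (1 - h * k * (1 - l * p)) * q"
    using q hk by (auto intro: mult_right_mono)
  have "(1 - h * k * (1 - l * p)) * q + k * psi_primitive l (p + h * q)
      = q + k * psi_primitive l p - k * l * h\<^sup>2 * q\<^sup>2 / 2"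
    unfolding psi_primitive_def by (simp add: algebra_simps power2_eq_square)
  also have "\<dots> \<le> E"
    using energy(1) k l by (simp add: diff_le_eq add_increasing2)
  finally show dissipation: "(1 - h * k * (1 - l * p)) * q + k * psi_primitive l (p + h * q) \<le> E" .
  have "0 \<le> k * psi_primitive l p"
    using p lp k by (simp add: psi_primitive_nonneg)
  then have "q < k * psi_primitive l M"
    using energy by linarith
  then have "h * q < (h * k) * psi_primitive l M"
    using h by simp
  also have "\<dots> \<le> M"
  proof -
    have "0 \<le> psi_primitive l M" "psi_primitive l M \<le> M"
      using l lM unfolding M_def by (auto intro: psi_primitive_nonneg psi_primitive_le)
    then show ?thesis
      using \<open>0 < h * k\<close> hk by (intro order_trans[OF mult_left_le_one_le[of "psi_primitive l M" "h * k"]]) auto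
  qed
  finally have "p + h * q < 2 * M"
    using p by simp
  \<comment> \<open>\<open>psi_primitive l\<close> increases on \<open>[0, 2 M]\<close>, so the energy bound confines \<open>p + h q\<close> below \<open>M\<close>.\<close>
  show "p + h * q < M"
  proof (rule ccontr)
    assume "\<not> p + h * q < M"
    then have "M \<le> p + h * q" by simp
    moreover have "l * (M + (p + h * q)) < 2"
    proof -
      have "l * (p + h * q) < l * (2 * M)"
        using \<open>p + h * q < 2 * M\<close> l by simp
      then show ?thesis
        using lM by (simp add: distrib_left)
    qed
    ultimately have "psi_primitive l M \<le> psi_primitive l (p + h * q)"
      using psi_primitive_strict_mono[of M "p + h * q" l] by fastforce
    then have "k * psi_primitive l M \<le> k * psi_primitive l (p + h * q)"
      using k by simp
    then show False
      using dissipation factor_nonneg energy(2) by linarith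
  qed
qed

lemma diameter_bounds_invariant:
  fixes l h k P0 Q0 :: real
  defines "M \<equiv> 1 / (4 * l)"
  assumes l: "0 < l" and h: "0 < h" and k: "0 < k" and hk: "h * k < 1"
    and P0: "0 \<le> P0" "P0 < M" and Q0: "0 \<le> Q0"
    and energy: "Q0 + k * psi_primitive l P0 < k * psi_primitive l M"
  shows "0 \<le> fst (diameter_bounds l h k P0 Q0 n) \<and> fst (diameter_bounds l h k P0 Q0 n) < M
    \<and> 0 \<le> snd (diameter_bounds l h k P0 Q0 n)
    \<and> snd (diameter_bounds l h k P0 Q0 n) + k * psi_primitive l (fst (diameter_bounds l h k P0 Q0 n))
        \<le> Q0 + k * psi_primitive l P0
    \<and> snd (diameter_bounds l h k P0 Q0 n) \<le> (1 - h * k * (3 / 4)) ^ n * Q0"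
proof (induction n)
  case 0
  then show ?case
    using P0 Q0 by simp
next
  case (Suc n)
  obtain p q where pq: "diameter_bounds l h k P0 Q0 n = (p, q)"
    by fastforce
  with Suc have IH: "0 \<le> p" "p < M" "0 \<le> q" "q + k * psi_primitive l p \<le> Q0 + k * psi_primitive l P0"
      "q \<le> (1 - h * k * (3 / 4)) ^ n * Q0"
    by auto
  note step = diameter_bounds_step[OF l h k hk IH(1,2,3)[unfolded M_def] IH(4) energy[unfolded M_def],
      folded M_def]
  have "(1 - h * k * (1 - l * p)) * q \<le> (1 - h * k * (3 / 4)) * q"
    by (fact step(4))
  also have "\<dots> \<le> (1 - h * k * (3 / 4)) * ((1 - h * k * (3 / 4)) ^ n * Q0)"
    using IH(5) hk by (intro mult_left_mono) auto
  finally have "(1 - h * k * (1 - l * p)) * q \<le> (1 - h * k * (3 / 4)) ^ Suc n * Q0"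
    by simp
  then show ?case
    using step(1-3) IH(1) h IH(3) pq by auto
qed

definition spread_le :: "nat \<Rightarrow> (nat \<Rightarrow> 'a::real_normed_vector) \<Rightarrow> real \<Rightarrow> bool" where
  "spread_le N y r \<longleftrightarrow> (\<forall>i<N. \<forall>j<N. norm (y i - y j) \<le> r)"

lemma update_eq_weighted_sum:
  fixes v :: "nat \<Rightarrow> 'a::real_vector"
  assumes i: "i < N" and sum_w: "(\<Sum>j<N. w j) = 1"
  shows "v i + t *\<^sub>R (\<Sum>j<N. w j *\<^sub>R (v j - v i))
    = (\<Sum>j<N. ((if j = i then 1 - t else 0) + t * w j) *\<^sub>R v j)"
proof -
  have "(\<Sum>j<N. (if j = i then 1 - t else 0) *\<^sub>R v j) = (1 - t) *\<^sub>R v i"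
    using i by (simp add: if_distrib[of "\<lambda>c. c *\<^sub>R _"] cong: if_cong)
  then have rhs: "(\<Sum>j<N. ((if j = i then 1 - t else 0) + t * w j) *\<^sub>R v j)
      = (1 - t) *\<^sub>R v i + t *\<^sub>R (\<Sum>j<N. w j *\<^sub>R v j)"
    by (simp add: scaleR_add_left sum.distrib scaleR_sum_right)
  have lhs: "(\<Sum>j<N. w j *\<^sub>R (v j - v i)) = (\<Sum>j<N. w j *\<^sub>R v j) - v i"
    using sum_w by (simp add: scaleR_diff_right sum_subtractf flip: scaleR_sum_left)
  show ?thesis
    unfolding lhs rhs by (simp add: algebra_simps)
qed

lemma scaleR_diff_weighted_sums:
  fixes v :: "nat \<Rightarrow> 'a::real_vector"
  assumes "(\<Sum>j<N. b j) = \<beta>" and "(\<Sum>j<N. b' j) = \<beta>"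
  shows "\<beta> *\<^sub>R ((\<Sum>j<N. b j *\<^sub>R v j) - (\<Sum>j<N. b' j *\<^sub>R v j))
    = (\<Sum>j<N. \<Sum>l<N. (b j * b' l) *\<^sub>R (v j - v l))"
proof -
  have "(\<Sum>j<N. \<Sum>l<N. (b j * b' l) *\<^sub>R v j) = (\<Sum>j<N. \<beta> *\<^sub>R (b j *\<^sub>R v j))"
    using assms(2) by (simp add: mult.commute flip: scaleR_sum_left sum_distrib_left)
  moreover have "(\<Sum>j<N. \<Sum>l<N. (b j * b' l) *\<^sub>R v l) = (\<Sum>l<N. \<beta> *\<^sub>R (b' l *\<^sub>R v l))"
    using assms(1) by (subst sum.swap) (simp flip: scaleR_sum_left sum_distrib_right)
  ultimately show ?thesis
    by (simp add: scaleR_diff_right sum_subtractf scaleR_sum_right)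
qed

lemma weighted_sums_dist_le:
  fixes v :: "nat \<Rightarrow> 'a::real_normed_vector"
  assumes w: "\<forall>j<N. \<mu> \<le> w j" and w': "\<forall>j<N. \<mu> \<le> w' j"
    and sum_w: "(\<Sum>j<N. w j) = 1" and sum_w': "(\<Sum>j<N. w' j) = 1"
    and spread: "spread_le N v Q"
  shows "norm ((\<Sum>j<N. w j *\<^sub>R v j) - (\<Sum>j<N. w' j *\<^sub>R v j)) \<le> (1 - real N * \<mu>) * Q"
proof -
  \<comment> \<open>The common part \<open>\<mu>\<close> of the weights cancels; coupling the excess weights \<open>b\<close>, \<open>b'\<close>
    (both of mass \<open>\<beta>\<close>) bounds the difference by \<open>\<beta> Q\<close>.\<close>
  define b where "b j = w j - \<mu>" for j
  define b' where "b' j = w' j - \<mu>" for j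
  define \<beta> where "\<beta> = 1 - real N * \<mu>"
  have sum_b: "(\<Sum>j<N. b j) = \<beta>" "(\<Sum>j<N. b' j) = \<beta>"
    using sum_w sum_w' unfolding b_def b'_def \<beta>_def by (simp_all add: sum_subtractf)
  have b_nonneg: "\<forall>j\<in>{..<N}. 0 \<le> b j" "\<forall>j\<in>{..<N}. 0 \<le> b' j"
    using w w' unfolding b_def b'_def by auto
  have diff: "(\<Sum>j<N. w j *\<^sub>R v j) - (\<Sum>j<N. w' j *\<^sub>R v j)
      = (\<Sum>j<N. b j *\<^sub>R v j) - (\<Sum>j<N. b' j *\<^sub>R v j)"
    unfolding b_def b'_def by (simp add: scaleR_diff_left sum_subtractf)
  have "0 \<le> \<beta>"
    using sum_b b_nonneg by (metis sum_nonneg)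
  show ?thesis
  proof (cases "\<beta> = 0")
    case True
    then have "\<forall>j\<in>{..<N}. b j = 0 \<and> b' j = 0"
      using sum_b b_nonneg sum_nonneg_eq_0_iff[of "{..<N}" b] sum_nonneg_eq_0_iff[of "{..<N}" b']
      by simp
    then show ?thesis
      unfolding diff \<beta>_def[symmetric] True by simp
  next
    case False
    have "\<beta> * norm ((\<Sum>j<N. b j *\<^sub>R v j) - (\<Sum>j<N. b' j *\<^sub>R v j))
        = norm (\<Sum>j<N. \<Sum>l<N. (b j * b' l) *\<^sub>R (v j - v l))"
      using arg_cong[OF scaleR_diff_weighted_sums[OF sum_b, of v], of norm] \<open>0 \<le> \<beta>\<close> by simp
    also have "\<dots> \<le> (\<Sum>j<N. \<Sum>l<N. (b j * b' l) * Q)"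
    proof (rule order_trans[OF norm_sum sum_mono[OF order_trans[OF norm_sum sum_mono]]])
      fix j l
      assume "j \<in> {..<N}" "l \<in> {..<N}"
      then have "0 \<le> b j * b' l" and "norm (v j - v l) \<le> Q"
        using spread b_nonneg unfolding spread_le_def by auto
      then show "norm ((b j * b' l) *\<^sub>R (v j - v l)) \<le> b j * b' l * Q"
        by (simp add: mult_left_mono)
    qed
    also have "\<dots> = \<beta> * (\<beta> * Q)"
      using sum_b by (simp add: mult.assoc flip: sum_distrib_left sum_distrib_right)
    finally show ?thesis
      unfolding diff \<beta>_def[symmetric] using False \<open>0 \<le> \<beta>\<close> by simp
  qed
qed

lemma frobD_nonneg: "0 \<le> frobD N y"
  unfolding frobD_def by (auto intro!: sum_nonneg)

lemma frobD_cong: "(\<And>i. i < N \<Longrightarrow> y i = z i) \<Longrightarrow> frobD N y = frobD N z"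
  unfolding frobD_def by simp

lemma spread_le_frobD: "spread_le N y (frobD N y)"
  unfolding spread_le_def
proof (intro allI impI)
  fix i j
  assume "i < N" "j < N"
  then have "(norm (y i - y j))\<^sup>2 \<le> (\<Sum>i'<N. \<Sum>j'<N. (norm (y i' - y j'))\<^sup>2)"
    by (intro order_trans[OF _ member_le_sum[of i]] member_le_sum) (auto intro: sum_nonneg)
  then show "norm (y i - y j) \<le> frobD N y"
    unfolding frobD_def by (simp add: real_le_rsqrt)
qed

lemma frobDD_le_spread:
  assumes "spread_le N y r" and "spread_le N z s"
  shows "frobDD N y z \<le> real N * (r + s)"
proof (cases "N = 0")
  case False
  then have "0 \<le> r" "0 \<le> s"
    using assms unfolding spread_le_def by (metis norm_zero diff_self neq0_conv)+
  have "norm ((y i - y j) - (z i - z j)) \<le> r + s" if "i < N" "j < N" for i j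
    using assms that unfolding spread_le_def by (meson norm_triangle_ineq4 add_mono order_trans)
  then have "(\<Sum>i<N. \<Sum>j<N. (norm ((y i - y j) - (z i - z j)))\<^sup>2) \<le> (\<Sum>i<N. \<Sum>j<N. (r + s)\<^sup>2)"
    by (intro sum_mono power_mono) auto
  also have "\<dots> = (real N * (r + s))\<^sup>2"
    by (simp add: power2_eq_square)
  finally show ?thesis
    unfolding frobDD_def using \<open>0 \<le> r\<close> \<open>0 \<le> s\<close> by (simp add: real_le_lsqrt)
qed (simp add: frobDD_def)

lemma one_minus_power_le_exp:
  assumes "0 \<le> b" "b \<le> t" "t \<le> 1"
  shows "(1 - t) ^ n \<le> exp (- b * real n)"
proof -
  have "1 - t \<le> exp (- t)"
    using exp_ge_add_one_self[of "- t"] by simp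
  also have "\<dots> \<le> exp (- b)"
    using assms by simp
  finally have "1 - t \<le> exp (- b)" .
  then have "(1 - t) ^ n \<le> exp (- b) ^ n"
    using assms by (intro power_mono) auto
  then show ?thesis
    by (simp add: mult.commute flip: exp_of_nat_mult)
qed

lemma le_tail_coefficient:
  assumes K: "0 \<le> K" and \<epsilon>: "0 < \<epsilon>" "\<epsilon> < 1" and b: "0 \<le> b" "b < \<epsilon>"
  shows "K \<le> sqrt (K\<^sup>2 * \<epsilon>) * exp b / (1 - (1 - \<epsilon>) * exp b)"
proof -
  define D where "D = 1 - (1 - \<epsilon>) * exp b"
  have "(1 - \<epsilon>) * exp b < exp (- \<epsilon>) * exp \<epsilon>"
    using \<epsilon> b exp_ge_add_one_self[of "- \<epsilon>"] by (intro mult_le_less_imp_less) auto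
  then have "0 < D"
    unfolding D_def by (simp add: exp_minus)
  have "(1 - \<epsilon>) * 1 \<le> (1 - \<epsilon>) * exp b"
    using \<epsilon> b by (intro mult_left_mono) auto
  then have "D \<le> \<epsilon>"
    unfolding D_def by simp
  also have "\<dots> \<le> sqrt \<epsilon>"
    using \<epsilon> by (simp add: real_le_rsqrt power2_eq_square mult_le_cancel_left1)
  also have "\<dots> \<le> sqrt \<epsilon> * exp b"
    using b by simp
  finally have "K * D \<le> sqrt (K\<^sup>2 * \<epsilon>) * exp b"
    using K by (simp add: real_sqrt_mult mult_left_mono mult.assoc)
  then show ?thesis
    using \<open>0 < D\<close> unfolding D_def[symmetric] by (simp add: field_simps)
qed

lemma MT_position_spread_step:
  assumes sol: "MT_solution N \<kappa> a h x v" and h: "0 \<le> h"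
    and "spread_le N (x n) p" and "spread_le N (v n) q"
  shows "spread_le N (x (Suc n)) (p + h * q)"
  unfolding spread_le_def
proof (intro allI impI)
  fix i j
  assume "i < N" "j < N"
  then have "x (Suc n) i - x (Suc n) j = (x n i - x n j) + h *\<^sub>R (v n i - v n j)"
    and "norm (x n i - x n j) \<le> p" "norm (v n i - v n j) \<le> q"
    using sol assms(3,4) unfolding MT_solution_def spread_le_def by (auto simp: algebra_simps)
  moreover have "norm (h *\<^sub>R (v n i - v n j)) \<le> h * q"
    using h \<open>norm (v n i - v n j) \<le> q\<close> by (simp add: mult_left_mono)
  ultimately show "norm (x (Suc n) i - x (Suc n) j) \<le> p + h * q"
    by (metis norm_triangle_le add_mono)
qed

locale mt_influence =
  fixes N :: nat and a :: "real \<Rightarrow> real" and c1 c2 La :: real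
  assumes N_ge_1: "1 \<le> N" and c1_pos: "0 < c1" and c1_le_c2: "c1 \<le> c2"
    and a_ge_c1: "\<And>r. 0 \<le> r \<Longrightarrow> c1 \<le> a r"
    and La_pos: "0 < La"
    and a_lipschitz: "\<And>r1 r2. 0 \<le> r1 \<Longrightarrow> 0 \<le> r2 \<Longrightarrow> \<bar>a r1 - a r2\<bar> \<le> La * \<bar>r1 - r2\<bar>"
begin

definition L :: real where
  "L = lip_phi N La c1 c2 * real N"

lemma L_pos: "0 < L"
  using N_ge_1 c1_pos c1_le_c2 La_pos unfolding L_def lip_phi_def by (simp add: add_pos_nonneg)

lemma M_const_eq: "M_const N La c1 c2 = 1 / (4 * L)"
  unfolding M_const_def L_def by (simp add: algebra_simps)

lemma psi_eq: "psi N La c1 c2 = (\<lambda>s. 1 - L * s)"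
  unfolding psi_def L_def by (simp add: algebra_simps)

lemma sum_a_ge: "real N * c1 \<le> (\<Sum>k<N. a (norm (x i - x k)))"
proof -
  have "(\<Sum>k<N. c1) \<le> (\<Sum>k<N. a (norm (x i - x k)))"
    by (rule sum_mono) (simp add: a_ge_c1)
  then show ?thesis
    by simp
qed

lemma mt_phi_sum: "(\<Sum>j<N. mt_phi N a x i j) = 1"
proof -
  have "0 < real N * c1"
    using N_ge_1 c1_pos by simp
  then have "0 < (\<Sum>k<N. a (norm (x i - x k)))"
    using sum_a_ge[of x i] by linarith
  then show ?thesis
    unfolding mt_phi_def by (simp flip: sum_divide_distrib)
qed

lemma mt_phi_ge:
  assumes spread: "spread_le N x P" and P: "0 \<le> P" and "i < N" "j < N"
  shows "(1 - L * P) / real N \<le> mt_phi N a x i j"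
proof -
  define S where "S = (\<Sum>k<N. a (norm (x i - x k)))"
  have S_ge: "real N * c1 \<le> S"
    unfolding S_def by (rule sum_a_ge)
  have "S - real N * a (norm (x i - x j)) = (\<Sum>k<N. a (norm (x i - x k)) - a (norm (x i - x j)))"
    unfolding S_def by (simp add: sum_subtractf)
  also have "\<dots> \<le> (\<Sum>k<N. La * P)"
  proof (rule sum_mono)
    fix k
    assume "k \<in> {..<N}"
    have "a (norm (x i - x k)) - a (norm (x i - x j)) \<le> La * \<bar>norm (x i - x k) - norm (x i - x j)\<bar>"
      using a_lipschitz[of "norm (x i - x k)" "norm (x i - x j)"] by simp
    also have "\<dots> \<le> La * norm ((x i - x k) - (x i - x j))"
      using La_pos by (intro mult_left_mono norm_triangle_ineq3) simp
    also have "\<dots> \<le> La * P"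
      using spread \<open>k \<in> {..<N}\<close> \<open>j < N\<close> La_pos unfolding spread_le_def
      by (simp add: norm_minus_commute)
    finally show "a (norm (x i - x k)) - a (norm (x i - x j)) \<le> La * P" .
  qed
  also have "\<dots> \<le> L * P * S"
  proof -
    have "real N * La \<le> La * (1 + c2 / c1) * real N"
      using La_pos c1_pos c1_le_c2 by (simp add: field_simps)
    also have "\<dots> = L * (real N * c1)"
      using N_ge_1 c1_pos unfolding L_def lip_phi_def by (simp add: field_simps)
    also have "\<dots> \<le> L * S"
      using S_ge L_pos by simp
    finally have "P * (real N * La) \<le> P * (L * S)"
      using P by (rule mult_left_mono)
    then show ?thesis
      by (simp add: algebra_simps)
  qed
  finally have "(1 - L * P) * S \<le> real N * a (norm (x i - x j))"
    by (simp add: algebra_simps)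
  moreover have "0 < real N * c1"
    using N_ge_1 c1_pos by simp
  then have "0 < S" "0 < real N"
    using S_ge N_ge_1 by auto
  ultimately show ?thesis
    unfolding mt_phi_def S_def[symmetric] by (simp add: field_simps)
qed

lemma MT_velocity_spread_step:
  assumes sol: "MT_solution N \<kappa> a h x v" and hk: "0 \<le> h * \<kappa>" "h * \<kappa> \<le> 1"
    and x_spread: "spread_le N (x n) p" and p: "0 \<le> p" and v_spread: "spread_le N (v n) q"
  shows "spread_le N (v (Suc n)) ((1 - h * \<kappa> * (1 - L * p)) * q)"
proof -
  define w where "w i j = (if j = i then 1 - h * \<kappa> else 0) + h * \<kappa> * mt_phi N a (x n) i j" for i j
  define \<mu> where "\<mu> = h * \<kappa> * ((1 - L * p) / real N)"
  have v_Suc: "v (Suc n) i = (\<Sum>j<N. w i j *\<^sub>R v n j)" if "i < N" for i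
    using sol that update_eq_weighted_sum[OF that mt_phi_sum]
    unfolding MT_solution_def w_def by simp
  have sum_w: "(\<Sum>j<N. w i j) = 1" if "i < N" for i
    using mt_phi_sum[of "x n" i] unfolding w_def by (simp add: that sum.distrib flip: sum_distrib_left)
  have w_ge: "\<forall>j<N. \<mu> \<le> w i j" if "i < N" for i
  proof (intro allI impI)
    fix j
    assume "j < N"
    have "\<mu> \<le> h * \<kappa> * mt_phi N a (x n) i j"
      unfolding \<mu>_def using mt_phi_ge[OF x_spread p \<open>i < N\<close> \<open>j < N\<close>] hk(1) by (rule mult_left_mono)
    moreover have "0 \<le> (if j = i then 1 - h * \<kappa> else 0)"
      using hk by simp
    ultimately show "\<mu> \<le> w i j"
      unfolding w_def by linarith
  qed
  have "real N * \<mu> = h * \<kappa> * (1 - L * p)"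
    unfolding \<mu>_def using N_ge_1 by simp
  then show ?thesis
    unfolding spread_le_def
    using weighted_sums_dist_le[OF w_ge w_ge sum_w sum_w v_spread] v_Suc by simp
qed

lemma MT_spread_le_diameter_bounds:
  assumes sol: "MT_solution N \<kappa> a h x v" and h: "0 < h" and \<kappa>: "0 < \<kappa>" and hk: "h * \<kappa> < 1"
    and P0: "0 \<le> P0" "P0 < 1 / (4 * L)" and Q0: "0 \<le> Q0"
    and energy: "Q0 + \<kappa> * psi_primitive L P0 < \<kappa> * psi_primitive L (1 / (4 * L))"
    and x0: "spread_le N (x 0) P0" and v0: "spread_le N (v 0) Q0"
  shows "spread_le N (x n) (fst (diameter_bounds L h \<kappa> P0 Q0 n))
    \<and> spread_le N (v n) (snd (diameter_bounds L h \<kappa> P0 Q0 n))"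
proof (induction n)
  case 0
  then show ?case
    using x0 v0 by simp
next
  case (Suc n)
  obtain p q where pq: "diameter_bounds L h \<kappa> P0 Q0 n = (p, q)"
    by fastforce
  have "0 \<le> p"
    using diameter_bounds_invariant[OF L_pos h \<kappa> hk P0 Q0 energy, of n] pq by simp
  then show ?case
    using Suc pq MT_position_spread_step[OF sol] MT_velocity_spread_step[OF sol] h \<kappa> hk by simp
qed

lemma MT_velocity_spread_decay:
  assumes sol: "MT_solution N \<kappa> a h x v" and h: "0 < h" and \<kappa>: "0 < \<kappa>" and hk: "h * \<kappa> < 1"
    and x0: "frobD N (x 0) < M_const N La c1 c2"
    and v0: "frobD N (v 0) < \<kappa> * integral {frobD N (x 0)..M_const N La c1 c2} (psi N La c1 c2)"
  shows "spread_le N (v n) ((1 - h * \<kappa> * (3 / 4)) ^ n * frobD N (v 0))"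
proof -
  have "integral {frobD N (x 0)..M_const N La c1 c2} (psi N La c1 c2)
      = psi_primitive L (1 / (4 * L)) - psi_primitive L (frobD N (x 0))"
    unfolding M_const_eq psi_eq using x0 by (intro integral_one_minus_linear) (simp add: M_const_eq)
  then have energy: "frobD N (v 0) + \<kappa> * psi_primitive L (frobD N (x 0))
      < \<kappa> * psi_primitive L (1 / (4 * L))"
    using v0 by (simp add: right_diff_distrib)
  show ?thesis
    using MT_spread_le_diameter_bounds[OF sol h \<kappa> hk frobD_nonneg x0[unfolded M_const_eq]
        frobD_nonneg energy spread_le_frobD spread_le_frobD, of n]
      diameter_bounds_invariant[OF L_pos h \<kappa> hk frobD_nonneg x0[unfolded M_const_eq] frobD_nonneg energy, of n]
    unfolding spread_le_def by (meson order_trans)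
qed

lemma MT_frobDD_decay:
  assumes sol: "MT_solution N \<kappa> a h x v" and sol': "MT_solution N \<kappa> a h x' v'"
    and h: "0 < h" and \<kappa>: "0 < \<kappa>" and hk: "h * \<kappa> < 1"
    and x0: "frobD N (x 0) < M_const N La c1 c2"
    and v0: "frobD N (v 0) < \<kappa> * integral {frobD N (x 0)..M_const N La c1 c2} (psi N La c1 c2)"
    and x0': "frobD N (x' 0) < M_const N La c1 c2"
    and v0': "frobD N (v' 0) < \<kappa> * integral {frobD N (x' 0)..M_const N La c1 c2} (psi N La c1 c2)"
    and b: "0 \<le> b" "b \<le> h * \<kappa> * (3 / 4)"
  shows "frobDD N (v n) (v' n) \<le> exp (- b * real n) * (real N * (frobD N (v 0) + frobD N (v' 0)))"
proof -
  have "frobDD N (v n) (v' n) \<le> (1 - h * \<kappa> * (3 / 4)) ^ n * (real N * (frobD N (v 0) + frobD N (v' 0)))"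
    using frobDD_le_spread[OF MT_velocity_spread_decay[OF sol h \<kappa> hk x0 v0]
        MT_velocity_spread_decay[OF sol' h \<kappa> hk x0' v0']]
    by (simp add: algebra_simps)
  also have "\<dots> \<le> exp (- b * real n) * (real N * (frobD N (v 0) + frobD N (v' 0)))"
    using one_minus_power_le_exp[of b "h * \<kappa> * (3 / 4)" n] b hk
    by (intro mult_right_mono) (auto simp: frobD_nonneg)
  finally show ?thesis .
qed

lemma MT_frobDD_bound:
  assumes sol: "MT_solution N \<kappa> a h x v" and sol': "MT_solution N \<kappa> a h x' v'"
    and h: "0 < h" and \<kappa>: "0 < \<kappa>" and hk: "h * \<kappa> < \<epsilon>" and \<epsilon>: "\<epsilon> < 1" and C: "0 \<le> C" "C \<le> 1"
    and x0: "frobD N (x 0) < M_const N La c1 c2"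
    and v0: "frobD N (v 0) < \<kappa> * integral {frobD N (x 0)..M_const N La c1 c2} (psi N La c1 c2)"
    and x0': "frobD N (x' 0) < M_const N La c1 c2"
    and v0': "frobD N (v' 0) < \<kappa> * integral {frobD N (x' 0)..M_const N La c1 c2} (psi N La c1 c2)"
  defines "K \<equiv> real N * (frobD N (v 0) + frobD N (v' 0))" and "b \<equiv> C * \<kappa> * (3 / 4) * h"
  shows "frobDD N (v n) (v' n) \<le> (1 - \<epsilon>) ^ n * frobDD N (v 0) (v' 0)
    + sqrt (K\<^sup>2 * \<epsilon>) * exp b / (1 - (1 - \<epsilon>) * exp b) * exp (- b * real n)"
proof -
  have "0 < h * \<kappa>"
    using h \<kappa> by simp
  have b: "0 \<le> b" "b \<le> h * \<kappa> * (3 / 4)"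
    unfolding b_def using C h \<kappa> by (auto simp: mult_right_le_one_le mult_le_cancel_right1)
  have "K \<le> sqrt (K\<^sup>2 * \<epsilon>) * exp b / (1 - (1 - \<epsilon>) * exp b)"
    using b hk \<epsilon> \<open>0 < h * \<kappa>\<close> unfolding K_def by (intro le_tail_coefficient) (auto simp: frobD_nonneg)
  then have "K * exp (- b * real n) \<le> sqrt (K\<^sup>2 * \<epsilon>) * exp b / (1 - (1 - \<epsilon>) * exp b) * exp (- b * real n)"
    by (rule mult_right_mono) simp
  moreover have "frobDD N (v n) (v' n) \<le> K * exp (- b * real n)"
    unfolding K_def using MT_frobDD_decay[OF sol sol' h \<kappa> _ x0 v0 x0' v0' b] hk \<epsilon>
    by (simp add: mult.commute)
  moreover have "0 \<le> (1 - \<epsilon>) ^ n * frobDD N (v 0) (v' 0)"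
    using \<epsilon> by (simp add: frobDD_def sum_nonneg)
  ultimately show ?thesis
    by linarith
qed

end

theorem corollary4p7:
  fixes N :: nat and \<kappa> c1 c2 La C :: real and a :: "real \<Rightarrow> real"
    and V0 Vb0 :: "nat \<Rightarrow> real^'d"
  assumes N: "N \<ge> 1" and kappa: "\<kappa> > 0"
    and c1: "0 < c1" and c12: "c1 \<le> c2"
    and a_bounds: "\<And>r. r \<ge> 0 \<Longrightarrow> c1 \<le> a r \<and> a r \<le> c2"
    and La: "La > 0"
    and a_lip: "\<And>r1 r2. r1 \<ge> 0 \<Longrightarrow> r2 \<ge> 0 \<Longrightarrow> \<bar>a r1 - a r2\<bar> \<le> La * \<bar>r1 - r2\<bar>"
    and C: "0 < C" "C < 1"
  shows "\<exists>cb0 cb1 cb2 :: real. cb0 \<ge> 0 \<and> cb1 \<ge> 0 \<and> cb2 \<ge> 0 \<and>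
    (\<forall>X0 Xb0 :: nat \<Rightarrow> real^'d.
      frobD N X0 < M_const N La c1 c2 \<and> frobD N Xb0 < M_const N La c1 c2 \<and>
      frobD N V0 < \<kappa> * integral {frobD N X0..M_const N La c1 c2} (psi N La c1 c2) \<and>
      frobD N Vb0 < \<kappa> * integral {frobD N Xb0..M_const N La c1 c2} (psi N La c1 c2) \<longrightarrow>
      (\<forall>\<epsilon>::real. 0 < \<epsilon> \<and> \<epsilon> < 1 \<longrightarrow>
        (\<exists>h0>0. \<forall>h x v xb vb.
          0 < h \<and> h < h0 \<and> h < min 1 (1 / \<kappa>) \<and>
          MT_solution N \<kappa> a h x v \<and> MT_solution N \<kappa> a h xb vb \<and>
          (\<forall>i<N. x 0 i = X0 i \<and> v 0 i = V0 i \<and> xb 0 i = Xb0 i \<and> vb 0 i = Vb0 i) \<longrightarrow>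
          (let b1 = sqrt (cb0 * \<epsilon> + cb1 * h + cb2 * h\<^sup>2);
               b2 = C * \<kappa> * psi N La c1 c2 (M_const N La c1 c2) * h
           in \<forall>n. frobDD N (v n) (vb n)
                 \<le> (1 - \<epsilon>) ^ n * frobDD N (v 0) (vb 0)
                   + b1 * exp b2 / (1 - (1 - \<epsilon>) * exp b2) * exp (- b2 * real n)))))"
proof -
  interpret mt_influence N a c1 c2 La
    using N c1 c12 a_bounds La a_lip by unfold_locales auto
  have psi_M: "psi N La c1 c2 (M_const N La c1 c2) = 3 / 4"
    using L_pos by (simp add: psi_eq M_const_eq)
  define K where "K = real N * (frobD N V0 + frobD N Vb0)"
  show ?thesis
  proof (rule exI[of _ "K\<^sup>2"], rule exI[of _ 0], rule exI[of _ 0], intro conjI allI impI, goal_cases)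
    case (4 X0 Xb0 \<epsilon>)
    show ?case
    proof (intro exI[of _ "\<epsilon> / \<kappa>"] conjI allI impI, goal_cases)
      case (2 h x v xb vb)
      then have "frobD N (x 0) = frobD N X0" "frobD N (v 0) = frobD N V0"
        "frobD N (xb 0) = frobD N Xb0" "frobD N (vb 0) = frobD N Vb0"
        by (auto intro: frobD_cong)
      with 2 4 show ?case
        using MT_frobDD_bound[of \<kappa> h x v xb vb \<epsilon> C] C kappa
        unfolding Let_def psi_M K_def by (simp add: field_simps)
    qed (use 4 kappa in simp)
  qed simp_all
qed

end
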